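(* Let $K\subset\mathbb{R}$ be a real quadratic field with nontrivial automorphism $x\mapsto x'$, let $L\subset K$ be a pseudolattice, and for $t\in\mathbb{R}$ let $\Lambda_t(L)=\{le^{t/2}+il'e^{-t/2}: l\in L\}\subset\mathbb{C}$. Equip $\mathbb{C}$ with the pairing $(x\cdot y)=\mathrm{Im}(xy)=x_0y_1+x_1y_0$ for $x=x_0+ix_1$, $y=y_0+iy_1$, and set $\Lambda_t(L)^!=\{\mu\in\mathbb{C}:(\lambda\cdot\mu)\in\mathbb{Z}\ \text{for all }\lambda\in\Lambda_t(L)\}$. Let $M=L^?=\{m\in K:\mathrm{tr}_{K/\mathbb{Q}}(l'm)\in\mathbb{Z}\ \text{for all } l\in L\}$. Then $$\Lambda_t(L)^!=\Lambda_t(M)=\{me^{t/2}+im'e^{-t/2}: m\in M\}.$$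
   Context: A pseudolattice $L\subset K$ is a subgroup of $K$ that is free abelian of rank 2 and spans $K$ over $\mathbb{Q}$. *)

theory Defs
  imports Complex_Main
begin

text \<open>The real quadratic field K = Q(sqrt d) inside the reals, for an integer d > 0
  that is not a perfect square (every real quadratic field has this form).\<close>
definition qfield :: "int \<Rightarrow> real set" where
  "qfield d = {of_rat a + of_rat b * sqrt (of_int d) | a b. True}"

definition qconj :: "int \<Rightarrow> real \<Rightarrow> real" where
  "qconj d x = (THE y. \<exists>a b. x = of_rat a + of_rat b * sqrt (of_int d)
                          \<and> y = of_rat a - of_rat b * sqrt (of_int d))"

definition qtrace :: "int \<Rightarrow> real \<Rightarrow> real" where
  "qtrace d x = x + qconj d x"

definition pseudolattice :: "int \<Rightarrow> real set \<Rightarrow> bool" where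
  "pseudolattice d L \<longleftrightarrow> (\<exists>a b.
      L = {of_int m * a + of_int n * b | m n. True}
    \<and> (\<forall>m n :: int. of_int m * a + of_int n * b = 0 \<longrightarrow> m = 0 \<and> n = 0)
    \<and> {of_rat q * a + of_rat r * b | q r. True} = qfield d)"

definition Lambda :: "int \<Rightarrow> real \<Rightarrow> real set \<Rightarrow> complex set" where
  "Lambda d t L = {Complex (l * exp (t/2)) (qconj d l * exp (- t/2)) | l. l \<in> L}"

definition cpair :: "complex \<Rightarrow> complex \<Rightarrow> real" where
  "cpair x y = Im (x * y)"

definition cdual :: "complex set \<Rightarrow> complex set" where
  "cdual S = {y. \<forall>x\<in>S. cpair x y \<in> \<int>}"

definition tdual :: "int \<Rightarrow> real set \<Rightarrow> real set" where
  "tdual d L = {m \<in> qfield d. \<forall>l\<in>L. qtrace d (qconj d l * m) \<in> \<int>}"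

end

theory Submission
  imports Defs
begin

text \<open>The map \<open>l \<mapsto> l e^(t/2) + i l' e^(-t/2)\<close> turns the pairing into the trace form:
  the images of \<open>l\<close> and \<open>m\<close> pair to \<open>l m' + l' m = tr(l' m)\<close>. Hence an image of
  \<open>m \<in> K\<close> lies in \<open>\<Lambda>_t(L)^!\<close> exactly when \<open>m \<in> L^?\<close>, and it remains to show that
  \<open>\<Lambda>_t(L)^!\<close> consists of images of elements of \<open>K\<close>. Pairing \<open>\<mu>\<close> with the images of a
  \<open>\<int>\<close>-basis \<open>a, b\<close> of \<open>L\<close> gives a linear system \<open>a u + a' v = p, b u + b' v = q\<close> with
  integer \<open>p, q\<close> in the rescaled coordinates \<open>u, v\<close> of \<open>\<mu>\<close>. Its determinant
  \<open>a b' - a' b\<close> is nonzero because \<open>a, b\<close> are \<open>\<rat>\<close>-independent, and Cramer's rule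
  exhibits \<open>v\<close> as an element of \<open>K\<close> with \<open>v' = u\<close>.\<close>

definition qembed :: "int \<Rightarrow> real \<Rightarrow> real \<Rightarrow> complex" where
  "qembed d t l = Complex (l * exp (t/2)) (qconj d l * exp (- t/2))"

lemma Lambda_eq_image: "Lambda d t L = qembed d t ` L"
  by (auto simp: Lambda_def qembed_def)

lemma cpair_qembed_left:
  "cpair (qembed d t l) y = l * (exp (t/2) * Im y) + qconj d l * (exp (- t/2) * Re y)"
  by (simp add: cpair_def qembed_def algebra_simps)

locale real_quadratic_field =
  fixes d :: int
  assumes d_pos: "d > 0" and sqrt_irrational: "sqrt (of_int d) \<notin> \<rat>"
begin

abbreviation sqd :: real where "sqd \<equiv> sqrt (of_int d)"

lemma sqd_square: "sqd * sqd = of_int d"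
  using d_pos by simp

lemma qcoords_eq_iff:
  "of_rat a + of_rat b * sqd = of_rat c + of_rat e * sqd \<longleftrightarrow> a = c \<and> b = e"
proof
  assume eq: "of_rat a + of_rat b * sqd = of_rat c + of_rat e * sqd"
  have "b = e"
  proof (rule ccontr)
    assume "b \<noteq> e"
    with eq have "sqd = of_rat ((c - a) / (b - e))"
      by (simp add: of_rat_diff of_rat_divide field_simps)
    with sqrt_irrational show False by (metis Rats_of_rat)
  qed
  with eq show "a = c \<and> b = e" by simp
qed simp

lemma qfieldE:
  assumes "x \<in> qfield d"
  obtains a b where "x = of_rat a + of_rat b * sqd"
  using assms unfolding qfield_def by blast

lemma qfieldI: "of_rat a + of_rat b * sqd \<in> qfield d"
  unfolding qfield_def by blast

lemma qconj_eq: "qconj d (of_rat a + of_rat b * sqd) = of_rat a - of_rat b * sqd"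
  unfolding qconj_def by (rule the_equality) (auto simp: qcoords_eq_iff)

lemma qfield_Rats: "x \<in> \<rat> \<Longrightarrow> x \<in> qfield d"
  using qfieldI[of _ 0] by (auto elim: Rats_cases)

lemma qconj_Rats: "x \<in> \<rat> \<Longrightarrow> qconj d x = x"
  using qconj_eq[of _ 0] by (auto elim: Rats_cases)

lemma qfield_qconj: "x \<in> qfield d \<Longrightarrow> qconj d x \<in> qfield d"
  using qfieldI[of _ "- _"] by (auto elim!: qfieldE simp: qconj_eq of_rat_minus)

lemma qconj_qconj: "x \<in> qfield d \<Longrightarrow> qconj d (qconj d x) = x"
  using qconj_eq[of _ "- _"] by (auto elim!: qfieldE simp: qconj_eq of_rat_minus)

lemma qfield_add: "x \<in> qfield d \<Longrightarrow> y \<in> qfield d \<Longrightarrow> x + y \<in> qfield d"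
  using qfieldI[of "_ + _" "_ + _"] by (auto elim!: qfieldE simp: of_rat_add algebra_simps)

lemma qconj_add: "x \<in> qfield d \<Longrightarrow> y \<in> qfield d \<Longrightarrow> qconj d (x + y) = qconj d x + qconj d y"
  using qconj_eq[of "_ + _" "_ + _"]
  by (auto elim!: qfieldE simp: qconj_eq of_rat_add algebra_simps)

lemma qfield_uminus: "x \<in> qfield d \<Longrightarrow> - x \<in> qfield d"
  using qfieldI[of "- _" "- _"] by (auto elim!: qfieldE simp: of_rat_minus)

lemma qconj_uminus: "x \<in> qfield d \<Longrightarrow> qconj d (- x) = - qconj d x"
  using qconj_eq[of "- _" "- _"] by (auto elim!: qfieldE simp: qconj_eq of_rat_minus)

lemma qfield_diff: "x \<in> qfield d \<Longrightarrow> y \<in> qfield d \<Longrightarrow> x - y \<in> qfield d"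
  using qfield_add[of x "- y"] qfield_uminus[of y] by simp

lemma qconj_diff: "x \<in> qfield d \<Longrightarrow> y \<in> qfield d \<Longrightarrow> qconj d (x - y) = qconj d x - qconj d y"
  using qconj_add[of x "- y"] qfield_uminus[of y] qconj_uminus[of y] by simp

lemma qcoords_mult:
  "(of_rat a + of_rat b * sqd) * (of_rat c + of_rat e * sqd)
     = of_rat (a * c + b * e * of_int d) + of_rat (a * e + b * c) * sqd"
  "(of_rat a - of_rat b * sqd) * (of_rat c - of_rat e * sqd)
     = of_rat (a * c + b * e * of_int d) - of_rat (a * e + b * c) * sqd"
proof -
  have "(x + y * s) * (z + w * s) = (x * z + y * w * (s * s)) + (x * w + y * z) * s"
    "(x - y * s) * (z - w * s) = (x * z + y * w * (s * s)) - (x * w + y * z) * s"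
    for x y z w s :: real
    by algebra+
  then show "(of_rat a + of_rat b * sqd) * (of_rat c + of_rat e * sqd)
     = of_rat (a * c + b * e * of_int d) + of_rat (a * e + b * c) * sqd"
   and "(of_rat a - of_rat b * sqd) * (of_rat c - of_rat e * sqd)
     = of_rat (a * c + b * e * of_int d) - of_rat (a * e + b * c) * sqd"
    by (simp_all only: sqd_square of_rat_add of_rat_mult of_rat_of_int_eq)
qed

lemma qfield_mult: "x \<in> qfield d \<Longrightarrow> y \<in> qfield d \<Longrightarrow> x * y \<in> qfield d"
  by (auto elim!: qfieldE simp: qcoords_mult qfieldI)

lemma qconj_mult: "x \<in> qfield d \<Longrightarrow> y \<in> qfield d \<Longrightarrow> qconj d (x * y) = qconj d x * qconj d y"
  by (auto elim!: qfieldE simp: qcoords_mult qconj_eq)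

lemma qconj_eq_self_imp_Rats: "x \<in> qfield d \<Longrightarrow> qconj d x = x \<Longrightarrow> x \<in> \<rat>"
  using sqrt_irrational by (auto elim!: qfieldE simp: qconj_eq)

lemma qconj_eq_0_iff: "x \<in> qfield d \<Longrightarrow> qconj d x = 0 \<longleftrightarrow> x = 0"
  by (metis qconj_Rats qconj_qconj Rats_0)

lemma qfield_inverse_qconj:
  assumes x: "x \<in> qfield d"
  shows "inverse x = qconj d x / (x * qconj d x)" and "x * qconj d x \<in> \<rat>"
proof -
  show "inverse x = qconj d x / (x * qconj d x)"
    using qconj_eq_0_iff[OF x] by (cases "x = 0") (simp_all add: field_simps)
  show "x * qconj d x \<in> \<rat>"
    using x by (intro qconj_eq_self_imp_Rats)
      (simp_all add: qfield_mult qfield_qconj qconj_mult qconj_qconj mult.commute)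
qed

lemma qfield_inverse:
  assumes "x \<in> qfield d"
  shows "inverse x \<in> qfield d"
proof -
  have "inverse (x * qconj d x) \<in> qfield d"
    using qfield_inverse_qconj(2)[OF assms] Rats_inverse qfield_Rats by blast
  with assms show ?thesis
    unfolding qfield_inverse_qconj(1)[OF assms] divide_inverse
    by (simp add: qfield_mult qfield_qconj)
qed

lemma qconj_inverse:
  assumes x: "x \<in> qfield d"
  shows "qconj d (inverse x) = inverse (qconj d x)"
proof (cases "x = 0")
  case False
  have "qconj d x * qconj d (inverse x) = qconj d (x * inverse x)"
    using x by (simp add: qconj_mult qfield_inverse)
  also have "\<dots> = 1"
    using False by (simp add: qconj_Rats)
  finally show ?thesis
    using False x qconj_eq_0_iff by (simp add: field_simps)
qed (simp add: qconj_Rats)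

lemma qfield_divide: "x \<in> qfield d \<Longrightarrow> y \<in> qfield d \<Longrightarrow> x / y \<in> qfield d"
  by (simp add: divide_inverse qfield_mult qfield_inverse)

lemma qconj_divide: "x \<in> qfield d \<Longrightarrow> y \<in> qfield d \<Longrightarrow> qconj d (x / y) = qconj d x / qconj d y"
  by (simp add: divide_inverse qconj_mult qfield_inverse qconj_inverse)

lemmas qfield_closed = qfield_add qfield_diff qfield_mult qfield_divide qfield_qconj qfield_Rats
lemmas qconj_simps = qconj_add qconj_diff qconj_mult qconj_divide qconj_qconj qconj_Rats

lemma cpair_qembed:
  assumes "l \<in> qfield d" "m \<in> qfield d"
  shows "cpair (qembed d t l) (qembed d t m) = qtrace d (qconj d l * m)"
proof -
  have "exp (t/2) * exp (- t/2) = 1"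
    by (simp add: exp_minus)
  then show ?thesis
    using assms unfolding cpair_qembed_left qtrace_def
    by (simp add: qembed_def qconj_simps qfield_closed algebra_simps)
qed

lemma qembed_in_cdual_iff:
  assumes "L \<subseteq> qfield d" "m \<in> qfield d"
  shows "qembed d t m \<in> cdual (Lambda d t L) \<longleftrightarrow> m \<in> tdual d L"
proof -
  have "cpair (qembed d t l) (qembed d t m) = qtrace d (qconj d l * m)" if "l \<in> L" for l
    using assms that by (blast intro: cpair_qembed)
  with assms(2) show ?thesis
    by (auto simp: cdual_def tdual_def Lambda_eq_image)
qed

lemma qconj_det_nonzero:
  assumes a: "a \<in> qfield d" and b: "b \<in> qfield d"
    and indep: "\<forall>m n :: int. of_int m * a + of_int n * b = 0 \<longrightarrow> m = 0 \<and> n = 0"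
  shows "a * qconj d b - qconj d a * b \<noteq> 0"
proof
  assume det: "a * qconj d b - qconj d a * b = 0"
  have "a \<noteq> 0"
    using indep[rule_format, of 1 0] by auto
  moreover have "qconj d a \<noteq> 0"
    using \<open>a \<noteq> 0\<close> a qconj_eq_0_iff by blast
  ultimately have "qconj d (b / a) = b / a"
    using det a b by (simp add: qconj_divide field_simps)
  then have "b / a \<in> \<rat>"
    using a b by (simp add: qconj_eq_self_imp_Rats qfield_divide)
  then obtain i j :: int where "j > 0" "b / a = of_int i / of_int j"
    by (metis Rats_cases')
  then have "of_int (- i) * a + of_int j * b = 0"
    using \<open>a \<noteq> 0\<close> by (simp add: field_simps)
  with indep \<open>j > 0\<close> show False by blast
qed

lemma qconj_system_solution:
  assumes a: "a \<in> qfield d" and b: "b \<in> qfield d"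
    and det: "a * qconj d b - qconj d a * b \<noteq> 0"
    and p_rat: "a * u + qconj d a * v \<in> \<rat>" and q_rat: "b * u + qconj d b * v \<in> \<rat>"
  shows "v \<in> qfield d" and "qconj d v = u"
proof -
  define p where "p = a * u + qconj d a * v"
  define q where "q = b * u + qconj d b * v"
  have v: "v = (a * q - b * p) / (a * qconj d b - qconj d a * b)"
    using det by (simp add: p_def q_def field_simps)
  have "p \<in> qfield d" "q \<in> qfield d" "qconj d p = p" "qconj d q = q"
    using p_rat q_rat by (simp_all add: p_def q_def qfield_Rats qconj_Rats)
  then show "v \<in> qfield d" and "qconj d v = u"
    using a b det qconj_eq_0_iff[of "a * qconj d b - qconj d a * b"] unfolding v
    by (simp_all add: qfield_closed qconj_simps) (simp_all add: p_def q_def field_simps)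
qed

lemma cdual_Lambda_subset_qembed:
  assumes "a \<in> L" "b \<in> L" "L \<subseteq> qfield d"
    and det: "a * qconj d b - qconj d a * b \<noteq> 0"
  shows "cdual (Lambda d t L) \<subseteq> qembed d t ` qfield d"
proof
  fix y assume y: "y \<in> cdual (Lambda d t L)"
  define u where "u = exp (t/2) * Im y"
  define v where "v = exp (- t/2) * Re y"
  have "l * u + qconj d l * v \<in> \<rat>" if "l \<in> L" for l
    using y that cpair_qembed_left[of d t l y] Ints_subset_Rats
    by (auto simp: cdual_def Lambda_eq_image u_def v_def)
  then have "v \<in> qfield d" "qconj d v = u"
    using qconj_system_solution[of a b u v] assms by auto
  moreover have "y = qembed d t v"
    using \<open>qconj d v = u\<close>
    by (simp add: qembed_def complex_eq_iff u_def v_def mult.assoc flip: exp_add)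
  ultimately show "y \<in> qembed d t ` qfield d" by blast
qed

lemma pseudolattice_qfield_basisE:
  assumes "pseudolattice d L"
  obtains a b where "a \<in> L" "b \<in> L" "L \<subseteq> qfield d" "a * qconj d b - qconj d a * b \<noteq> 0"
proof -
  obtain a b where L: "L = {of_int m * a + of_int n * b | m n. True}"
    and indep: "\<forall>m n :: int. of_int m * a + of_int n * b = 0 \<longrightarrow> m = 0 \<and> n = 0"
    and span: "{of_rat q * a + of_rat r * b | q r. True} = qfield d"
    using assms unfolding pseudolattice_def by blast
  have "a \<in> qfield d" "b \<in> qfield d"
    using span[THEN equalityD1] by (force intro: exI[of _ 0] exI[of _ 1])+
  moreover have "a \<in> L" "b \<in> L"
    unfolding L by (force intro: exI[of _ 0] exI[of _ 1])+
  moreover have "L \<subseteq> qfield d"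
    using \<open>a \<in> qfield d\<close> \<open>b \<in> qfield d\<close> unfolding L
    by (auto simp: qfield_add qfield_mult qfield_Rats)
  ultimately show ?thesis
    using that qconj_det_nonzero indep by blast
qed

end

theorem lemma4p8p1:
  fixes d :: int and L :: "real set" and t :: real
  assumes "d > 0" and "sqrt (of_int d) \<notin> \<rat>"
    and "pseudolattice d L"
  shows "cdual (Lambda d t L) = Lambda d t (tdual d L)"
proof -
  interpret real_quadratic_field d
    using assms(1,2) by unfold_locales
  obtain a b where "a \<in> L" "b \<in> L" and LK: "L \<subseteq> qfield d"
    and "a * qconj d b - qconj d a * b \<noteq> 0"
    using assms(3) by (rule pseudolattice_qfield_basisE)
  then have "cdual (Lambda d t L) \<subseteq> qembed d t ` qfield d"
    by (rule cdual_Lambda_subset_qembed)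
  moreover have "tdual d L \<subseteq> qfield d"
    by (auto simp: tdual_def)
  ultimately show ?thesis
    using qembed_in_cdual_iff[OF LK] unfolding Lambda_eq_image[of d t "tdual d L"] by blast
qed

end
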